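(* Let $\alpha\in(0,1]$ and $a,b\in\mathbb{R}$ with $0\le a<b$. Let $g:[a,b]\to[0,1]$ be $\alpha$-fractional integrable on $[a,b]$, and define $$ \ell:=\frac{\alpha(b-a)}{b^\alpha-a^\alpha}\int_a^b g(t)\,d_\alpha t. $$ Then $\ell\in[0,b-a]$ and $$ \int_{b-\ell}^b 1\,d_\alpha t\le\int_a^b g(t)\,d_\alpha t\le\int_a^{a+\ell}1\,d_\alpha t. $$
   Context: For $\alpha\in(0,1]$ and $0\le a<b$, $\int_a^b f(t)\,d_\alpha t:=\int_a^b f(t)\,t^{\alpha-1}\,dt$, and $f$ is called $\alpha$-fractional integrable on $[a,b]$ if this integral exists and is finite. *)

theory Defs
  imports "HOL-Analysis.Analysis"
begin

text \<open>alpha-fractional integral: integral over [a,b] of f(t) t^(alpha-1) dt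
  (Henstock-Kurzweil integral; for the nonnegative integrands here this coincides
  with the Lebesgue integral, including the improper case a = 0).\<close>

definition frac_integral :: "real \<Rightarrow> (real \<Rightarrow> real) \<Rightarrow> real \<Rightarrow> real \<Rightarrow> real" where
  "frac_integral \<alpha> f a b = integral {a..b} (\<lambda>t. f t * t powr (\<alpha> - 1))"

definition frac_integrable :: "real \<Rightarrow> (real \<Rightarrow> real) \<Rightarrow> real \<Rightarrow> real \<Rightarrow> bool" where
  "frac_integrable \<alpha> f a b \<longleftrightarrow> (\<lambda>t. f t * t powr (\<alpha> - 1)) integrable_on {a..b}"

end

theory Submission
  imports Defs
begin

text \<open>Write \<open>D = b\<^sup>\<alpha> - a\<^sup>\<alpha>\<close>. Since \<open>\<integral>\<^sub>x\<^sup>y t\<^sup>\<alpha>\<^sup>-\<^sup>1 dt = (y\<^sup>\<alpha> - x\<^sup>\<alpha>)/\<alpha>\<close> and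
  \<open>0 \<le> g \<le> 1\<close>, the integral \<open>I\<close> of \<open>g\<close> lies in \<open>[0, D/\<alpha>]\<close>, so \<open>s = \<alpha>I/D \<in> [0,1]\<close>
  and \<open>\<ell> = s(b - a) \<in> [0, b - a]\<close>. The two bounds then read
  \<open>b\<^sup>\<alpha> - (b - \<ell>)\<^sup>\<alpha> \<le> sD \<le> (a + \<ell>)\<^sup>\<alpha> - a\<^sup>\<alpha>\<close>, and both say that the concave function
  \<open>x\<^sup>\<alpha>\<close> lies above its chord over \<open>[a, b]\<close>, at the points \<open>a + \<ell>\<close> and \<open>b - \<ell>\<close>.\<close>

lemma has_integral_powr_Icc:
  fixes x y :: real
  assumes "0 < \<alpha>" "0 \<le> x" "x \<le> y"
  shows "((\<lambda>t. t powr (\<alpha> - 1)) has_integral (y powr \<alpha> - x powr \<alpha>) / \<alpha>) {x..y}"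
proof -
  have from_0: "((\<lambda>t. t powr (\<alpha> - 1)) has_integral c powr \<alpha> / \<alpha>) {0..c}" if "0 \<le> c" for c :: real
    using has_integral_powr_from_0[of "\<alpha> - 1" c] that assms(1) by simp
  have "integral {0..x} (\<lambda>t. t powr (\<alpha> - 1)) + integral {x..y} (\<lambda>t. t powr (\<alpha> - 1))
      = integral {0..y} (\<lambda>t. t powr (\<alpha> - 1))"
    using Henstock_Kurzweil_Integration.integral_combine[OF assms(2,3)
        has_integral_integrable[OF from_0[of y]]] assms by linarith
  then have "integral {x..y} (\<lambda>t. t powr (\<alpha> - 1)) = (y powr \<alpha> - x powr \<alpha>) / \<alpha>"
    using from_0[of x] from_0[of y] assms by (simp add: integral_unique diff_divide_distrib)
  moreover have "(\<lambda>t. t powr (\<alpha> - 1)) integrable_on {x..y}"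
    using assms by (intro integrable_subinterval_real[OF has_integral_integrable[OF from_0[of y]]]) auto
  ultimately show ?thesis
    by (metis integrable_integral)
qed

lemma frac_integral_one:
  assumes "0 < \<alpha>" "0 \<le> x" "x \<le> y"
  shows "frac_integral \<alpha> (\<lambda>t. 1) x y = (y powr \<alpha> - x powr \<alpha>) / \<alpha>"
  using has_integral_powr_Icc[OF assms] unfolding frac_integral_def by (simp add: integral_unique)

lemma frac_integral_bounds:
  assumes "0 < \<alpha>" "0 \<le> a" "a \<le> b"
    and "\<forall>t\<in>{a..b}. 0 \<le> g t \<and> g t \<le> 1"
    and "frac_integrable \<alpha> g a b"
  shows "0 \<le> frac_integral \<alpha> g a b"
    and "frac_integral \<alpha> g a b \<le> (b powr \<alpha> - a powr \<alpha>) / \<alpha>"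
proof -
  have int_g: "(\<lambda>t. g t * t powr (\<alpha> - 1)) integrable_on {a..b}"
    using assms(5) unfolding frac_integrable_def .
  show "0 \<le> frac_integral \<alpha> g a b"
    unfolding frac_integral_def using assms(4) by (intro integral_nonneg[OF int_g]) auto
  show "frac_integral \<alpha> g a b \<le> (b powr \<alpha> - a powr \<alpha>) / \<alpha>"
    unfolding frac_integral_def using assms(4)
    by (intro has_integral_le[OF integrable_integral[OF int_g] has_integral_powr_Icc[OF assms(1-3)]])
      (auto intro: mult_left_le_one_le)
qed

lemma le_powr_of_le_one:
  fixes t :: real
  assumes "0 \<le> t" "t \<le> 1" "0 < \<alpha>" "\<alpha> \<le> 1"
  shows "t \<le> t powr \<alpha>"
proof (cases "t = 0")
  case False
  then show ?thesis
    using powr_mono'[of \<alpha> 1 t] assms by simp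
qed simp

text \<open>At the endpoint \<open>0\<close> concavity reduces to \<open>(t y)\<^sup>\<alpha> = t\<^sup>\<alpha> y\<^sup>\<alpha> \<ge> t y\<^sup>\<alpha>\<close>.\<close>

lemma powr_concave:
  assumes "0 < \<alpha>" "\<alpha> \<le> 1"
  shows "concave_on {0..} (\<lambda>x::real. x powr \<alpha>)"
proof
  have concave_pos: "concave_on {0<..} (\<lambda>x::real. x powr \<alpha>)"
  proof (rule f''_le0_imp_concave)
    fix x :: real
    assume "x \<in> {0<..}"
    then show "((\<lambda>x. x powr \<alpha>) has_real_derivative \<alpha> * x powr (\<alpha> - 1)) (at x)"
      and "((\<lambda>x. \<alpha> * x powr (\<alpha> - 1)) has_real_derivative \<alpha> * ((\<alpha> - 1) * x powr (\<alpha> - 2))) (at x)"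
      by (auto intro!: derivative_eq_intros)
    show "\<alpha> * ((\<alpha> - 1) * x powr (\<alpha> - 2)) \<le> 0"
      using assms by (intro mult_nonneg_nonpos mult_nonpos_nonneg) auto
  qed simp
  fix t x y :: real
  assume t: "0 < t" "t < 1" and xy: "x \<in> {0..}" "y \<in> {0..}" "x < y"
  show "(1 - t) * x powr \<alpha> + t * y powr \<alpha> \<le> ((1 - t) *\<^sub>R x + t *\<^sub>R y) powr \<alpha>"
  proof (cases "x = 0")
    case True
    have "t * y powr \<alpha> \<le> t powr \<alpha> * y powr \<alpha>"
      using le_powr_of_le_one[of t \<alpha>] t assms by (intro mult_right_mono) auto
    then show ?thesis
      using True t xy by (simp add: powr_mult)
  next
    case False
    then show ?thesis
      using concave_onD[OF concave_pos, of t x y] t xy by auto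
  qed
qed simp

lemma concave_on_chord_le:
  fixes f :: "real \<Rightarrow> real"
  assumes "concave_on S f" "a \<in> S" "b \<in> S" "0 \<le> s" "s \<le> 1"
  shows "f a + s * (f b - f a) \<le> f (a + s * (b - a))"
    and "f b - s * (f b - f a) \<le> f (b - s * (b - a))"
proof -
  show "f a + s * (f b - f a) \<le> f (a + s * (b - a))"
    using concave_onD[OF assms(1) assms(4,5,2,3)] by (simp add: algebra_simps)
  show "f b - s * (f b - f a) \<le> f (b - s * (b - a))"
    using concave_onD[OF assms(1) assms(4,5,3,2)] by (simp add: algebra_simps)
qed

theorem mainTheorem4:
  fixes \<alpha> a b l :: real and g :: "real \<Rightarrow> real"
  assumes "0 < \<alpha>" "\<alpha> \<le> 1"
    and "0 \<le> a" "a < b"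
    and "\<forall>t\<in>{a..b}. 0 \<le> g t \<and> g t \<le> 1"
    and "frac_integrable \<alpha> g a b"
  defines "l \<equiv> \<alpha> * (b - a) / (b powr \<alpha> - a powr \<alpha>) * frac_integral \<alpha> g a b"
  shows "0 \<le> l \<and> l \<le> b - a
    \<and> frac_integral \<alpha> (\<lambda>t. 1) (b - l) b \<le> frac_integral \<alpha> g a b
    \<and> frac_integral \<alpha> g a b \<le> frac_integral \<alpha> (\<lambda>t. 1) a (a + l)"
proof -
  define I where "I = frac_integral \<alpha> g a b"
  define D where "D = b powr \<alpha> - a powr \<alpha>"
  define s where "s = \<alpha> * I / D"
  have "0 < D"
    unfolding D_def using assms(1,3,4) powr_less_mono2 by simp
  moreover have "0 \<le> I" "I \<le> D / \<alpha>"
    unfolding I_def D_def using frac_integral_bounds[OF assms(1,3) _ assms(5,6)] assms(4) by auto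
  ultimately have s: "0 \<le> s" "s \<le> 1" and I_eq: "I = s * D / \<alpha>"
    unfolding s_def using assms(1) by (auto simp: field_simps)
  have l_eq: "l = s * (b - a)"
    unfolding l_def s_def I_def D_def by simp
  have chord: "a powr \<alpha> + s * D \<le> (a + l) powr \<alpha>" "b powr \<alpha> - s * D \<le> (b - l) powr \<alpha>"
    using concave_on_chord_le[OF powr_concave[OF assms(1,2)] _ _ s, of a b] assms(3,4)
    unfolding D_def l_eq by auto
  have l: "0 \<le> l" "l \<le> b - a"
    using s assms(4) unfolding l_eq by (auto intro: mult_left_le_one_le)
  moreover have "(b powr \<alpha> - (b - l) powr \<alpha>) / \<alpha> \<le> s * D / \<alpha>"
    and "s * D / \<alpha> \<le> ((a + l) powr \<alpha> - a powr \<alpha>) / \<alpha>"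
    using chord assms(1) by (simp_all add: divide_right_mono)
  ultimately show ?thesis
    using frac_integral_one[OF assms(1)] assms(3)
    unfolding I_def[symmetric] I_eq by simp
qed

end
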